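(* Let $p$ be a (positive) stochastic choice function on a finite set $X$ such that there exist three alternatives $a,b,c\in X$ with $a\not\sim_p b$, $b\not\sim_p c$ and $a\not\sim_p c$. Then $p$ satisfies Independence of Symmetric Alternatives if and only if $p$ is a nondegenerate Nested Stochastic Choice (NSC).
   Context: $X$ is a finite set of alternatives and $\mathscr{A}$ is the collection of all nonempty subsets of $X$ (menus). A stochastic choice function is a map $p:X\times\mathscr{A}\to[0,1]$ with $\sum_{a\in A}p(a,A)=1$ for every $A\in\mathscr{A}$ and $p(x,A)=0$ for $x\notin A$; throughout, $p$ is positive: $p(a,A)>0$ whenever $a\in A$. For $B\subseteq X$ write $p(B,A)=\sum_{b\in B}p(b,A)$, and write $A\cup x$ for $A\cup\{x\}$. $p$ satisfies IIA at $a,b$ if $\frac{p(a,A)}{p(b,A)}=\frac{p(a,\{a,b\})}{p(b,\{a,b\})}$ for every $A\in\mathscr{A}$ with $a,b\in A$. Alternatives $a,b$ are revealed categorically similar, written $a\sim_p b$, if $p$ satisfies IIA at $a,b$. Independence of Symmetric Alternatives (ISA): for any $A\in\mathscr{A}$, $a,b\in A$ and $x\notin A$, if either ($a\sim_p x$ and $b\sim_p x$) or ($a\not\sim_p x$ and $b\not\sim_p x$), then $\frac{p(a,A)}{p(b,A)}=\frac{p(a,A\cup x)}{p(b,A\cup x)}$. $p$ is an NSC if there exist a partition $X_1,\dots,X_K$ of $X$, a function $u:X\to\mathbb{R}_{++}$ and a function $v:\bigcup_{i=1}^K 2^{X_i}\to\mathbb{R}_+$ with $v(\emptyset)=0$ such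 that for every $A\in\mathscr{A}$ and $a\in A\cap X_i$, $p(a,A)=\frac{v(A\cap X_i)}{\sum_{j=1}^K v(A\cap X_j)}\cdot\frac{u(a)}{\sum_{b\in A\cap X_i}u(b)}$. Such an NSC (with representation $(v,u,\{X_i\}_{i=1}^K)$) is nondegenerate if there is at most one index $i\le K$ for which there exists $a\in X_i$ with $\frac{\sum_{x\in A_i}u(x)}{v(A_i)}=\frac{u(a)}{v(\{a\})}$ for every $A_i\subseteq X_i$ with $a\in A_i$. *)

theory Defs
  imports "HOL-Analysis.Analysis"
begin

definition menus :: "'a set \<Rightarrow> 'a set set" where
  "menus X = {A. A \<subseteq> X \<and> A \<noteq> {}}"

definition pos_scf :: "'a set \<Rightarrow> ('a \<Rightarrow> 'a set \<Rightarrow> real) \<Rightarrow> bool" where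
  "pos_scf X p \<longleftrightarrow> finite X \<and>
     (\<forall>A\<in>menus X. (\<forall>x. 0 \<le> p x A \<and> p x A \<le> 1) \<and> (\<Sum>a\<in>A. p a A) = 1
        \<and> (\<forall>x. x \<notin> A \<longrightarrow> p x A = 0) \<and> (\<forall>a\<in>A. p a A > 0))"

definition IIA_at :: "'a set \<Rightarrow> ('a \<Rightarrow> 'a set \<Rightarrow> real) \<Rightarrow> 'a \<Rightarrow> 'a \<Rightarrow> bool" where
  "IIA_at X p a b \<longleftrightarrow> (\<forall>A\<in>menus X. a \<in> A \<and> b \<in> A \<longrightarrow>
      p a A / p b A = p a {a, b} / p b {a, b})"

definition cat_sim :: "'a set \<Rightarrow> ('a \<Rightarrow> 'a set \<Rightarrow> real) \<Rightarrow> 'a \<Rightarrow> 'a \<Rightarrow> bool" where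
  "cat_sim X p a b \<longleftrightarrow> IIA_at X p a b"

definition ISA :: "'a set \<Rightarrow> ('a \<Rightarrow> 'a set \<Rightarrow> real) \<Rightarrow> bool" where
  "ISA X p \<longleftrightarrow> (\<forall>A\<in>menus X. \<forall>a\<in>A. \<forall>b\<in>A. \<forall>x\<in>X - A.
      ((cat_sim X p a x \<and> cat_sim X p b x) \<or> (\<not> cat_sim X p a x \<and> \<not> cat_sim X p b x))
      \<longrightarrow> p a A / p b A = p a (insert x A) / p b (insert x A))"

definition is_partition :: "'a set \<Rightarrow> 'a set set \<Rightarrow> bool" where
  "is_partition X P \<longleftrightarrow> (\<forall>B\<in>P. B \<noteq> {}) \<and> \<Union>P = X \<and>
     (\<forall>B\<in>P. \<forall>C\<in>P. B \<noteq> C \<longrightarrow> B \<inter> C = {})"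

text \<open>NSC representation (v, u, P). The function v is only relevant on subsets of blocks;
  since blocks are disjoint, a single v on sets represents v on the union of their power sets.\<close>
definition NSC_rep :: "'a set \<Rightarrow> ('a \<Rightarrow> 'a set \<Rightarrow> real) \<Rightarrow> ('a set \<Rightarrow> real) \<Rightarrow> ('a \<Rightarrow> real)
    \<Rightarrow> 'a set set \<Rightarrow> bool" where
  "NSC_rep X p v u P \<longleftrightarrow> is_partition X P \<and> (\<forall>x\<in>X. u x > 0) \<and> v {} = 0 \<and>
     (\<forall>B\<in>P. \<forall>S. S \<subseteq> B \<longrightarrow> v S \<ge> 0) \<and>
     (\<forall>A\<in>menus X. \<forall>B\<in>P. \<forall>a\<in>A \<inter> B.
        p a A = v (A \<inter> B) / (\<Sum>C\<in>P. v (A \<inter> C)) * (u a / (\<Sum>b\<in>A \<inter> B. u b)))"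

definition NSC :: "'a set \<Rightarrow> ('a \<Rightarrow> 'a set \<Rightarrow> real) \<Rightarrow> bool" where
  "NSC X p \<longleftrightarrow> (\<exists>v u P. NSC_rep X p v u P)"

definition degenerate_block :: "('a set \<Rightarrow> real) \<Rightarrow> ('a \<Rightarrow> real) \<Rightarrow> 'a set \<Rightarrow> bool" where
  "degenerate_block v u B \<longleftrightarrow> (\<exists>a\<in>B. \<forall>S. S \<subseteq> B \<and> a \<in> S \<longrightarrow>
      (\<Sum>x\<in>S. u x) / v S = u a / v {a})"

definition nondegenerate_NSC :: "'a set \<Rightarrow> ('a \<Rightarrow> 'a set \<Rightarrow> real) \<Rightarrow> bool" where
  "nondegenerate_NSC X p \<longleftrightarrow> (\<exists>v u P. NSC_rep X p v u P \<and>
      (\<forall>B\<in>P. \<forall>C\<in>P. degenerate_block v u B \<and> degenerate_block v u C \<longrightarrow> B = C))"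

end

theory Submission
  imports Defs
begin

text \<open>Under a nested representation two alternatives of one block have the constant odds
  \<open>u a / u b\<close>, while the odds of alternatives from different blocks are constant only when both
  blocks are degenerate; so for a nondegenerate NSC revealed similarity means lying in the same
  block, and ISA follows.

  Conversely, ISA makes revealed similarity transitive, and its classes (categories) become the
  blocks. Within a category the odds are constant, which defines \<open>u\<close>. Across categories, ISA
  lets us delete the alternatives of all other categories without changing odds, so the odds
  between nonempty subsets \<open>S\<close>, \<open>T\<close> of two categories are those in the menu \<open>S \<union> T\<close>, and they
  multiply along any three distinct categories. Using a third category to avoid the reference
  point, this cocycle is a ratio \<open>v S / v T\<close>, and normalising the block probabilities of a menu
  gives the NSC formula. Two degenerate categories would contain revealed similar alternatives,
  so the representation is nondegenerate.\<close>


lemma pos_scf_finite: "pos_scf X p \<Longrightarrow> finite X"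
  by (simp add: pos_scf_def)

lemma pos_scf_pos: "pos_scf X p \<Longrightarrow> A \<in> menus X \<Longrightarrow> a \<in> A \<Longrightarrow> p a A > 0"
  by (simp add: pos_scf_def)

lemma pos_scf_sum_eq_1: "pos_scf X p \<Longrightarrow> A \<in> menus X \<Longrightarrow> (\<Sum>a\<in>A. p a A) = 1"
  by (simp add: pos_scf_def)

lemma cat_sim_odds:
  "cat_sim X p x y \<Longrightarrow> A \<in> menus X \<Longrightarrow> x \<in> A \<Longrightarrow> y \<in> A \<Longrightarrow>
    p x A / p y A = p x {x, y} / p y {x, y}"
  unfolding cat_sim_def IIA_at_def by blast

lemma cat_sim_sym: "cat_sim X p x y \<Longrightarrow> cat_sim X p y x"
  unfolding cat_sim_def IIA_at_def
proof (intro ballI impI)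
  fix A assume "\<forall>A\<in>menus X. x \<in> A \<and> y \<in> A \<longrightarrow> p x A / p y A = p x {x, y} / p y {x, y}"
    and "A \<in> menus X" "y \<in> A \<and> x \<in> A"
  then have "inverse (p x A / p y A) = inverse (p x {x, y} / p y {x, y})" by auto
  then show "p y A / p x A = p y {y, x} / p x {y, x}" by (simp add: insert_commute)
qed

lemma cat_sim_refl: "pos_scf X p \<Longrightarrow> x \<in> X \<Longrightarrow> cat_sim X p x x"
  unfolding cat_sim_def IIA_at_def
proof (intro ballI impI)
  fix A assume "pos_scf X p" "x \<in> X" "A \<in> menus X" "x \<in> A \<and> x \<in> A"
  moreover have "{x} \<in> menus X" using \<open>x \<in> X\<close> by (simp add: menus_def)
  ultimately show "p x A / p x A = p x {x, x} / p x {x, x}"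
    using pos_scf_pos[of X p A x] pos_scf_pos[of X p "{x}" x] by simp
qed

lemma is_partition_block_unique:
  "is_partition X P \<Longrightarrow> B \<in> P \<Longrightarrow> C \<in> P \<Longrightarrow> x \<in> B \<Longrightarrow> x \<in> C \<Longrightarrow> B = C"
  unfolding is_partition_def by blast

lemma is_partition_block_exists: "is_partition X P \<Longrightarrow> x \<in> X \<Longrightarrow> \<exists>B\<in>P. x \<in> B"
  unfolding is_partition_def by blast

lemma is_partition_block_subset: "is_partition X P \<Longrightarrow> B \<in> P \<Longrightarrow> B \<subseteq> X"
  unfolding is_partition_def by blast

section \<open>Odds under a nested representation\<close>

lemma NSC_rep_partition: "NSC_rep X p v u P \<Longrightarrow> is_partition X P"
  by (simp add: NSC_rep_def)

lemma NSC_rep_u_pos: "NSC_rep X p v u P \<Longrightarrow> x \<in> X \<Longrightarrow> u x > 0"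
  by (simp add: NSC_rep_def)

lemma NSC_rep_sum_u_pos:
  assumes "NSC_rep X p v u P" "pos_scf X p" "S \<subseteq> X" "S \<noteq> {}"
  shows "(\<Sum>z\<in>S. u z) > 0"
  using assms NSC_rep_u_pos pos_scf_finite finite_subset by (metis subsetD sum_pos)

lemma NSC_rep_formula:
  "NSC_rep X p v u P \<Longrightarrow> A \<in> menus X \<Longrightarrow> B \<in> P \<Longrightarrow> a \<in> A \<inter> B \<Longrightarrow>
    p a A = v (A \<inter> B) / (\<Sum>C\<in>P. v (A \<inter> C)) * (u a / (\<Sum>z\<in>A \<inter> B. u z))"
  unfolding NSC_rep_def by blast

lemma NSC_rep_v_nonzero:
  assumes "NSC_rep X p v u P" "pos_scf X p" "A \<in> menus X" "B \<in> P" "a \<in> A \<inter> B"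
  shows "v (A \<inter> B) \<noteq> 0"
  using NSC_rep_formula[OF assms(1,3-5)] pos_scf_pos[OF assms(2,3)] assms(5) by force

lemma NSC_rep_odds:
  assumes rep: "NSC_rep X p v u P" and ps: "pos_scf X p" and A: "A \<in> menus X"
    and B: "B \<in> P" and C: "C \<in> P" and a: "a \<in> A \<inter> B" and b: "b \<in> A \<inter> C"
  shows "p a A / p b A =
    (v (A \<inter> B) * u a / (\<Sum>z\<in>A \<inter> B. u z)) / (v (A \<inter> C) * u b / (\<Sum>z\<in>A \<inter> C. u z))"
proof -
  define D where "D = (\<Sum>C\<in>P. v (A \<inter> C))"
  have pa: "p a A = v (A \<inter> B) / D * (u a / (\<Sum>z\<in>A \<inter> B. u z))"
    using NSC_rep_formula[OF rep A B a] by (simp add: D_def)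
  have pb: "p b A = v (A \<inter> C) / D * (u b / (\<Sum>z\<in>A \<inter> C. u z))"
    using NSC_rep_formula[OF rep A C b] by (simp add: D_def)
  have "D \<noteq> 0" using pa pos_scf_pos[OF ps A, of a] a by auto
  then show ?thesis unfolding pa pb by (simp add: divide_simps)
qed

lemma NSC_rep_odds_same_block:
  assumes rep: "NSC_rep X p v u P" and ps: "pos_scf X p" and A: "A \<in> menus X"
    and B: "B \<in> P" and a: "a \<in> A \<inter> B" and b: "b \<in> A \<inter> B"
  shows "p a A / p b A = u a / u b"
proof -
  have "v (A \<inter> B) \<noteq> 0" using NSC_rep_v_nonzero[OF rep ps A B a] .
  moreover have "(\<Sum>z\<in>A \<inter> B. u z) > 0"
    using NSC_rep_sum_u_pos[OF rep ps, of "A \<inter> B"] A a by (auto simp: menus_def)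
  ultimately show ?thesis using NSC_rep_odds[OF rep ps A B B a b] by (simp add: field_simps)
qed

lemma NSC_rep_degenerate_factor:
  assumes rep: "NSC_rep X p v u P" and ps: "pos_scf X p"
    and A: "A \<in> menus X" and B: "B \<in> P" and x: "x \<in> A \<inter> B"
    and dB: "\<forall>S. S \<subseteq> B \<and> x \<in> S \<longrightarrow> (\<Sum>z\<in>S. u z) / v S = u x / v {x}"
  shows "v (A \<inter> B) * u x / (\<Sum>z\<in>A \<inter> B. u z) = v {x}"
proof -
  have xX: "x \<in> X" using is_partition_block_subset[OF NSC_rep_partition[OF rep] B] x by auto
  have "{x} \<in> menus X" using xX by (simp add: menus_def)
  then have "v {x} \<noteq> 0" using NSC_rep_v_nonzero[OF rep ps _ B, of "{x}" x] x by auto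
  moreover have "v (A \<inter> B) \<noteq> 0" using NSC_rep_v_nonzero[OF rep ps A B x] .
  moreover have "(\<Sum>z\<in>A \<inter> B. u z) > 0"
    using NSC_rep_sum_u_pos[OF rep ps, of "A \<inter> B"] A x by (auto simp: menus_def)
  moreover have "u x > 0" using NSC_rep_u_pos[OF rep xX] .
  moreover have "(\<Sum>z\<in>A \<inter> B. u z) / v (A \<inter> B) = u x / v {x}" using dB x by blast
  ultimately show ?thesis by (simp add: field_simps)
qed

text \<open>By \<open>NSC_rep_degenerate_factor\<close> the odds of \<open>x\<close> against \<open>y\<close> are \<open>v {x} / v {y}\<close> in every menu.\<close>
lemma NSC_rep_degenerate_imp_cat_sim:
  assumes rep: "NSC_rep X p v u P" and ps: "pos_scf X p"
    and B: "B \<in> P" and C: "C \<in> P" and x: "x \<in> B" and y: "y \<in> C"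
    and dB: "\<forall>S. S \<subseteq> B \<and> x \<in> S \<longrightarrow> (\<Sum>z\<in>S. u z) / v S = u x / v {x}"
    and dC: "\<forall>S. S \<subseteq> C \<and> y \<in> S \<longrightarrow> (\<Sum>z\<in>S. u z) / v S = u y / v {y}"
  shows "cat_sim X p x y"
proof -
  have part: "is_partition X P" using NSC_rep_partition[OF rep] .
  have xX: "x \<in> X" and yX: "y \<in> X" using is_partition_block_subset[OF part] B C x y by auto
  have "p x A / p y A = v {x} / v {y}" if A: "A \<in> menus X" "x \<in> A" "y \<in> A" for A
    using NSC_rep_odds[OF rep ps A(1) B C, of x y] NSC_rep_degenerate_factor[OF rep ps A(1) B _ dB]
      NSC_rep_degenerate_factor[OF rep ps A(1) C _ dC] A x y by simp
  moreover have "{x, y} \<in> menus X" using xX yX by (simp add: menus_def)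
  ultimately show ?thesis unfolding cat_sim_def IIA_at_def by auto
qed

lemma NSC_rep_cat_sim_imp_degenerate:
  assumes rep: "NSC_rep X p v u P" and ps: "pos_scf X p"
    and B: "B \<in> P" and C: "C \<in> P" and BC: "B \<noteq> C" and x: "x \<in> B" and y: "y \<in> C"
    and sim: "cat_sim X p x y"
  shows "degenerate_block v u B"
proof -
  have part: "is_partition X P" using NSC_rep_partition[OF rep] .
  have BX: "B \<subseteq> X" and yX: "y \<in> X" using is_partition_block_subset[OF part] B C y by auto
  have xX: "x \<in> X" using BX x by auto
  have "y \<notin> B" using is_partition_block_unique[OF part B C _ y] BC by blast
  have ux: "u x > 0" and uy: "u y > 0" using NSC_rep_u_pos[OF rep] xX yX by auto
  have pair: "{x, y} \<in> menus X" using xX yX by (simp add: menus_def)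
  have pB: "{x, y} \<inter> B = {x}" and pC: "{x, y} \<inter> C = {y}"
    using x y \<open>y \<notin> B\<close> is_partition_block_unique[OF part B C] by auto
  have vx: "v {x} \<noteq> 0" and vy: "v {y} \<noteq> 0"
    using NSC_rep_v_nonzero[OF rep ps pair B, of x] NSC_rep_v_nonzero[OF rep ps pair C, of y] pB pC
    by auto
  have pair_odds: "p x {x, y} / p y {x, y} = v {x} / v {y}"
    using NSC_rep_odds[OF rep ps pair B C, of x y] pB pC ux uy by simp
  show ?thesis unfolding degenerate_block_def
  proof (intro bexI[OF _ x] allI impI)
    fix S assume S: "S \<subseteq> B \<and> x \<in> S"
    define M where "M = insert y S"
    have M: "M \<in> menus X" using S BX yX by (auto simp: M_def menus_def)
    have MB: "M \<inter> B = S" and MC: "M \<inter> C = {y}"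
      using S \<open>y \<notin> B\<close> is_partition_block_unique[OF part B C] y by (auto simp: M_def)
    have vS: "v S \<noteq> 0" using NSC_rep_v_nonzero[OF rep ps M B, of x] MB S by (auto simp: M_def)
    have sS: "(\<Sum>z\<in>S. u z) > 0" using NSC_rep_sum_u_pos[OF rep ps, of S] S BX by blast
    have "p x M / p y M = (v S * u x / (\<Sum>z\<in>S. u z)) / (v {y} * u y / u y)"
      using NSC_rep_odds[OF rep ps M B C, of x y] S y unfolding MB MC by (simp add: M_def)
    moreover have "p x M / p y M = v {x} / v {y}"
      using cat_sim_odds[OF sim M] pair_odds S by (simp add: M_def)
    ultimately have "(v S * u x / (\<Sum>z\<in>S. u z)) / v {y} = v {x} / v {y}" using uy by simp
    then have "v S * u x / (\<Sum>z\<in>S. u z) = v {x}" using vy by (simp add: field_simps)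
    then show "(\<Sum>z\<in>S. u z) / v S = u x / v {x}" using vS vx sS ux by (simp add: field_simps)
  qed
qed

lemma NSC_rep_cat_sim_iff_same_block:
  assumes rep: "NSC_rep X p v u P" and ps: "pos_scf X p"
    and nd: "\<forall>B\<in>P. \<forall>C\<in>P. degenerate_block v u B \<and> degenerate_block v u C \<longrightarrow> B = C"
    and B: "B \<in> P" and C: "C \<in> P" and x: "x \<in> B" and y: "y \<in> C"
  shows "cat_sim X p x y \<longleftrightarrow> B = C"
proof
  assume sim: "cat_sim X p x y"
  show "B = C"
  proof (rule ccontr)
    assume "B \<noteq> C"
    then have "degenerate_block v u B" "degenerate_block v u C"
      using NSC_rep_cat_sim_imp_degenerate[OF rep ps] B C x y sim cat_sim_sym by metis+
    then show False using nd B C \<open>B \<noteq> C\<close> by blast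
  qed
next
  assume "B = C"
  have "{x, y} \<in> menus X"
    using is_partition_block_subset[OF NSC_rep_partition[OF rep] B] x y \<open>B = C\<close>
    by (auto simp: menus_def)
  then show "cat_sim X p x y" unfolding cat_sim_def IIA_at_def
    using NSC_rep_odds_same_block[OF rep ps _ B] x y \<open>B = C\<close> by auto
qed

lemma nondegenerate_NSC_imp_ISA:
  assumes ps: "pos_scf X p" and "nondegenerate_NSC X p"
  shows "ISA X p"
proof -
  obtain v u P where rep: "NSC_rep X p v u P"
    and nd: "\<forall>B\<in>P. \<forall>C\<in>P. degenerate_block v u B \<and> degenerate_block v u C \<longrightarrow> B = C"
    using assms(2) unfolding nondegenerate_NSC_def by blast
  have part: "is_partition X P" using NSC_rep_partition[OF rep] .
  note sim_iff = NSC_rep_cat_sim_iff_same_block[OF rep ps nd]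
  show ?thesis unfolding ISA_def
  proof (intro ballI impI)
    fix A a b x assume A: "A \<in> menus X" and a: "a \<in> A" and b: "b \<in> A" and x: "x \<in> X - A"
      and cond: "cat_sim X p a x \<and> cat_sim X p b x \<or> \<not> cat_sim X p a x \<and> \<not> cat_sim X p b x"
    have AX: "A \<subseteq> X" using A by (simp add: menus_def)
    have A': "insert x A \<in> menus X" using AX x by (auto simp: menus_def)
    obtain B C D where B: "B \<in> P" "a \<in> B" and C: "C \<in> P" "b \<in> C" and D: "D \<in> P" "x \<in> D"
      using is_partition_block_exists[OF part] a b x AX by (metis DiffD1 subsetD)
    consider "B = C" | "B \<noteq> C" "B \<noteq> D" "C \<noteq> D"
      using cond sim_iff[OF B(1) D(1) B(2) D(2)] sim_iff[OF C(1) D(1) C(2) D(2)] by blast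
    then show "p a A / p b A = p a (insert x A) / p b (insert x A)"
    proof cases
      case 1
      then show ?thesis
        using NSC_rep_odds_same_block[OF rep ps _ B(1), of _ a b] A A' a b B C by auto
    next
      case 2
      txt \<open>Then \<open>x\<close> joins neither block, so both block factors are unchanged.\<close>
      then have "x \<notin> B" "x \<notin> C" using is_partition_block_unique[OF part] B C D by blast+
      then have "insert x A \<inter> B = A \<inter> B" "insert x A \<inter> C = A \<inter> C" by auto
      then show ?thesis
        using NSC_rep_odds[OF rep ps A B(1) C(1), of a b] NSC_rep_odds[OF rep ps A' B(1) C(1), of a b]
          a b B C by simp
    qed
  qed
qed

section \<open>Revealed categories under ISA\<close>

locale ISA_choice =
  fixes X :: "'a set" and p :: "'a \<Rightarrow> 'a set \<Rightarrow> real"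
  assumes pos_scf: "pos_scf X p" and ISA: "ISA X p"
begin

abbreviation sim :: "'a \<Rightarrow> 'a \<Rightarrow> bool" where
  "sim x y \<equiv> cat_sim X p x y"

lemma finite_X: "finite X"
  using pos_scf_finite[OF pos_scf] .

lemma p_pos: "A \<in> menus X \<Longrightarrow> a \<in> A \<Longrightarrow> p a A > 0"
  using pos_scf_pos[OF pos_scf] .

lemma ISA_odds:
  "A \<in> menus X \<Longrightarrow> a \<in> A \<Longrightarrow> b \<in> A \<Longrightarrow> x \<in> X \<Longrightarrow> x \<notin> A \<Longrightarrow> (sim a x \<longleftrightarrow> sim b x) \<Longrightarrow>
    p a A / p b A = p a (insert x A) / p b (insert x A)"
  using ISA unfolding ISA_def by blast

text \<open>Adding \<open>y\<close>, which is similar to both \<open>x\<close> and \<open>z\<close>, to a menu does not change the odds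
  of \<open>x\<close> against \<open>z\<close>; in menus containing \<open>y\<close> these odds are the product of two constants.\<close>
lemma sim_trans:
  assumes xX: "x \<in> X" and yX: "y \<in> X" and zX: "z \<in> X" and xy: "sim x y" and yz: "sim y z"
  shows "sim x z"
proof -
  define K where "K = p x {x, y} / p y {x, y} * (p y {y, z} / p z {y, z})"
  have with_y: "p x A / p z A = K" if A: "A \<in> menus X" "x \<in> A" "y \<in> A" "z \<in> A" for A
  proof -
    have "p x A / p z A = (p x A / p y A) * (p y A / p z A)" using p_pos[OF A(1,3)] by simp
    also have "\<dots> = K" unfolding K_def using cat_sim_odds[OF xy A(1,2,3)] cat_sim_odds[OF yz A(1,3,4)]
      by simp
    finally show ?thesis .
  qed
  have "p x A / p z A = K" if A: "A \<in> menus X" "x \<in> A" "z \<in> A" for A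
  proof (cases "y \<in> A")
    case True then show ?thesis using with_y A by blast
  next
    case False
    have "p x A / p z A = p x (insert y A) / p z (insert y A)"
      using ISA_odds[OF A yX False] xy cat_sim_sym[OF yz] by blast
    also have "\<dots> = K" using with_y[of "insert y A"] yX A by (auto simp: menus_def)
    finally show ?thesis .
  qed
  moreover have "{x, z} \<in> menus X" using xX zX by (simp add: menus_def)
  ultimately show ?thesis unfolding cat_sim_def IIA_at_def by simp
qed

definition category :: "'a \<Rightarrow> 'a set" where
  "category x = {y \<in> X. sim x y}"

definition categories :: "'a set set" where
  "categories = category ` X"

lemma category_subset: "category x \<subseteq> X"
  unfolding category_def by blast

lemma mem_category_self: "x \<in> X \<Longrightarrow> x \<in> category x"
  unfolding category_def using cat_sim_refl[OF pos_scf] by blast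

lemma mem_category_iff: "y \<in> category x \<longleftrightarrow> y \<in> X \<and> sim x y"
  unfolding category_def by blast

lemma category_eq_iff:
  assumes xX: "x \<in> X" and yX: "y \<in> X"
  shows "category x = category y \<longleftrightarrow> sim x y"
proof
  assume "category x = category y"
  then have "y \<in> category x" using mem_category_self[OF yX] by simp
  then show "sim x y" by (simp add: mem_category_iff)
next
  assume xy: "sim x y"
  have "sim x z \<longleftrightarrow> sim y z" if "z \<in> X" for z
    using sim_trans[OF xX yX that xy] sim_trans[OF yX xX that cat_sim_sym[OF xy]] by blast
  then show "category x = category y" by (auto simp: mem_category_iff)
qed

lemma category_eqI: "x \<in> X \<Longrightarrow> y \<in> category x \<Longrightarrow> category y = category x"
  using category_eq_iff[of x y] by (simp add: mem_category_iff)

lemma category_disjoint: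
  assumes xX: "x \<in> X" and yX: "y \<in> X" and "\<not> sim x y"
  shows "category x \<inter> category y = {}"
proof (rule ccontr)
  assume "category x \<inter> category y \<noteq> {}"
  then obtain z where "z \<in> category x" "z \<in> category y" by blast
  then have "category z = category x" "category z = category y"
    using category_eqI[OF xX] category_eqI[OF yX] by blast+
  then have "category x = category y" by simp
  then show False using category_eq_iff[OF xX yX] assms(3) by simp
qed

lemma categories_partition: "is_partition X categories"
  unfolding is_partition_def categories_def
proof (intro conjI ballI impI)
  show "\<Union> (category ` X) = X" using mem_category_self category_subset by blast
next
  fix B C assume "B \<in> category ` X" "C \<in> category ` X" "B \<noteq> C"
  then obtain x y where "x \<in> X" "y \<in> X" "B = category x" "C = category y" by blast
  with \<open>B \<noteq> C\<close> show "B \<inter> C = {}" using category_disjoint category_eq_iff by simp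
qed (use mem_category_self in blast)

lemma categories_subset: "C \<in> categories \<Longrightarrow> C \<subseteq> X"
  unfolding categories_def using category_subset by blast

lemma categories_disjoint: "C \<in> categories \<Longrightarrow> D \<in> categories \<Longrightarrow> C \<noteq> D \<Longrightarrow> C \<inter> D = {}"
  using categories_partition unfolding is_partition_def by blast

lemma finite_categories: "finite categories"
  unfolding categories_def using finite_X by simp

lemma categories_eq_category:
  assumes "C \<in> categories" and "x \<in> C"
  shows "C = category x"
proof -
  obtain y where "y \<in> X" "C = category y" using assms(1) unfolding categories_def by blast
  then show ?thesis using category_eqI[of y x] assms(2) by simp
qed

lemma category_in_categories: "x \<in> X \<Longrightarrow> category x \<in> categories"
  unfolding categories_def by blast

definition anchor :: "'a \<Rightarrow> 'a" where
  "anchor x = (SOME y. y \<in> category x)"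

definition u :: "'a \<Rightarrow> real" where
  "u x = p x {x, anchor x} / p (anchor x) {x, anchor x}"

lemma anchor_mem: "x \<in> X \<Longrightarrow> anchor x \<in> category x"
  unfolding anchor_def using mem_category_self by (rule someI)

lemma anchor_eq: "x \<in> X \<Longrightarrow> y \<in> category x \<Longrightarrow> anchor y = anchor x"
  unfolding anchor_def by (subst category_eqI) auto

lemma u_pos: "x \<in> X \<Longrightarrow> u x > 0"
proof -
  assume xX: "x \<in> X"
  then have "{x, anchor x} \<in> menus X"
    using anchor_mem category_subset by (auto simp: menus_def)
  then show ?thesis unfolding u_def using p_pos by simp
qed

lemma sum_u_pos: "S \<subseteq> X \<Longrightarrow> S \<noteq> {} \<Longrightarrow> (\<Sum>z\<in>S. u z) > 0"
  using finite_subset[OF _ finite_X] u_pos by (intro sum_pos) auto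

text \<open>Both alternatives are compared with their common anchor inside the menu \<open>{x, y, anchor x}\<close>.\<close>
lemma odds_same_category:
  assumes A: "A \<in> menus X" and x: "x \<in> A" and y: "y \<in> A" and xy: "y \<in> category x"
  shows "p x A / p y A = u x / u y"
proof -
  have xX: "x \<in> X" and yX: "y \<in> X" using A x y by (auto simp: menus_def)
  define f where "f = anchor x"
  have f: "f \<in> category x" "f \<in> category y" unfolding f_def
    using anchor_mem[OF xX] category_eqI[OF xX xy] by auto
  have fX: "f \<in> X" using f category_subset by blast
  have sims: "sim x y" "sim x f" "sim y f" using xy f by (auto simp: mem_category_iff)
  define T where "T = {x, y, f}"
  have T: "T \<in> menus X" using xX yX fX by (simp add: T_def menus_def)
  have "p x T / p f T = u x" unfolding u_def f_def[symmetric]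
    using cat_sim_odds[OF sims(2) T] by (simp add: T_def)
  moreover have "p y T / p f T = u y" unfolding u_def anchor_eq[OF xX xy] f_def[symmetric]
    using cat_sim_odds[OF sims(3) T] by (simp add: T_def)
  moreover have "p x T / p y T = p x A / p y A"
    using cat_sim_odds[OF sims(1) T] cat_sim_odds[OF sims(1) A x y] by (simp add: T_def)
  moreover have "p f T > 0" using p_pos T by (simp add: T_def)
  ultimately show ?thesis by (simp add: field_simps)
qed

definition pset :: "'a set \<Rightarrow> 'a set \<Rightarrow> real" where
  "pset S A = (\<Sum>s\<in>S. p s A)"

definition odds :: "'a set \<Rightarrow> 'a set \<Rightarrow> real" where
  "odds S T = pset S (S \<union> T) / pset T (S \<union> T)"

lemma pset_pos: "A \<in> menus X \<Longrightarrow> S \<subseteq> A \<Longrightarrow> S \<noteq> {} \<Longrightarrow> pset S A > 0"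
  unfolding pset_def using finite_subset[OF _ finite_X] p_pos
  by (intro sum_pos) (auto simp: menus_def)

lemma pset_category:
  assumes A: "A \<in> menus X" and x: "x \<in> A"
  shows "pset (A \<inter> category x) A = p x A * ((\<Sum>z\<in>A \<inter> category x. u z) / u x)"
proof -
  have xX: "x \<in> X" using A x by (auto simp: menus_def)
  have "p z A = p x A * (u z / u x)" if z: "z \<in> A \<inter> category x" for z
  proof -
    have "u z > 0" "p z A > 0" using z u_pos category_subset p_pos[OF A] by auto
    then show ?thesis
      using odds_same_category[OF A x, of z] z u_pos[OF xX] by (auto simp: field_simps)
  qed
  then show ?thesis unfolding pset_def by (simp add: sum_distrib_left sum_divide_distrib)
qed

lemma odds_pos: "S \<subseteq> X \<Longrightarrow> T \<subseteq> X \<Longrightarrow> S \<noteq> {} \<Longrightarrow> T \<noteq> {} \<Longrightarrow> odds S T > 0"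
  unfolding odds_def by (simp add: menus_def pset_pos)

lemma odds_inverse: "S \<subseteq> X \<Longrightarrow> T \<subseteq> X \<Longrightarrow> S \<noteq> {} \<Longrightarrow> T \<noteq> {} \<Longrightarrow> odds S T * odds T S = 1"
  unfolding odds_def using pset_pos[of "S \<union> T" S] pset_pos[of "S \<union> T" T]
  by (simp add: menus_def Un_commute)

lemma odds_insert_set:
  assumes "finite Z" "Z \<subseteq> X - (category x \<union> category y)"
    and D: "D \<in> menus X" "D \<inter> Z = {}" and x: "x \<in> D" and y: "y \<in> D"
  shows "p x (D \<union> Z) / p y (D \<union> Z) = p x D / p y D"
  using assms(1,2) D(2)
proof (induction Z rule: finite_induct)
  case (insert z Z)
  have M: "D \<union> Z \<in> menus X" using D insert.prems by (auto simp: menus_def)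
  have "\<not> sim x z" "\<not> sim y z" using insert.prems unfolding category_def by auto
  moreover have "z \<notin> D \<union> Z" using insert.hyps insert.prems by auto
  ultimately show ?case
    using ISA_odds[OF M, of x y z] insert x y by auto
qed simp

text \<open>Deleting the alternatives of all other categories does not change the odds of an
  \<open>x \<in> A \<inter> C\<close> against a \<open>y \<in> A \<inter> D\<close>, and by \<open>pset_category\<close> these odds determine the
  ratio of block probabilities.\<close>
lemma odds_in_menu:
  assumes A: "A \<in> menus X" and C: "C \<in> categories" and D: "D \<in> categories" and "C \<noteq> D"
    and "A \<inter> C \<noteq> {}" and "A \<inter> D \<noteq> {}"
  shows "pset (A \<inter> C) A / pset (A \<inter> D) A = odds (A \<inter> C) (A \<inter> D)"
proof -
  obtain x y where x: "x \<in> A \<inter> C" and y: "y \<in> A \<inter> D" using assms by blast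
  have Cx: "C = category x" and Dy: "D = category y"
    using categories_eq_category C D x y by auto
  define M where "M = (A \<inter> C) \<union> (A \<inter> D)"
  have AX: "A \<subseteq> X" using A by (simp add: menus_def)
  have M: "M \<in> menus X" using AX x by (auto simp: M_def menus_def)
  have "C \<inter> D = {}" using categories_disjoint C D \<open>C \<noteq> D\<close> by blast
  then have MC: "M \<inter> category x = A \<inter> C" and MD: "M \<inter> category y = A \<inter> D"
    using Cx Dy by (auto simp: M_def)
  have "M \<union> (A - M) = A" by (auto simp: M_def)
  moreover have "finite (A - M)" using finite_subset[OF _ finite_X] AX by blast
  ultimately have odds_A: "p x A / p y A = p x M / p y M"
    using odds_insert_set[of "A - M" x y M] M AX x y Cx Dy by (auto simp: M_def)
  have "pset (A \<inter> C) A / pset (A \<inter> D) A =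
      p x A / p y A * (((\<Sum>z\<in>A \<inter> C. u z) / u x) / ((\<Sum>z\<in>A \<inter> D. u z) / u y))"
    using pset_category[OF A, of x] pset_category[OF A, of y] x y Cx Dy by (simp add: ac_simps)
  also have "\<dots> = pset (M \<inter> category x) M / pset (M \<inter> category y) M"
    using pset_category[OF M, of x] pset_category[OF M, of y] x y odds_A
    unfolding MC MD by (simp add: ac_simps M_def)
  also have "\<dots> = odds (A \<inter> C) (A \<inter> D)" unfolding MC MD odds_def by (simp add: M_def)
  finally show ?thesis .
qed

lemma odds_cocycle:
  assumes C: "C \<in> categories" and D: "D \<in> categories" and E: "E \<in> categories"
    and "C \<noteq> D" "D \<noteq> E" "C \<noteq> E"
    and S: "S \<subseteq> C" "S \<noteq> {}" and T: "T \<subseteq> D" "T \<noteq> {}" and R: "R \<subseteq> E" "R \<noteq> {}"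
  shows "odds S T * odds T R = odds S R"
proof -
  define M where "M = S \<union> T \<union> R"
  have M: "M \<in> menus X" using S T R categories_subset[OF C] categories_subset[OF D]
      categories_subset[OF E] by (auto simp: M_def menus_def)
  have disj: "C \<inter> D = {}" "D \<inter> E = {}" "C \<inter> E = {}"
    using categories_disjoint assms(1-6) by blast+
  then have MC: "M \<inter> C = S" and MD: "M \<inter> D = T" and ME: "M \<inter> E = R"
    using S T R by (auto simp: M_def)
  have "pset T M > 0" using pset_pos[OF M, of T] T by (auto simp: M_def)
  moreover have "odds S T = pset S M / pset T M" "odds T R = pset T M / pset R M"
    "odds S R = pset S M / pset R M"
    using odds_in_menu[OF M C D] odds_in_menu[OF M D E] odds_in_menu[OF M C E] assms(4-6) S T R
    unfolding MC MD ME by auto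
  ultimately show ?thesis by simp
qed

end

section \<open>The nested representation\<close>

locale ISA_choice_three_categories = ISA_choice +
  fixes a b c :: 'a
  assumes a_mem: "a \<in> X" and b_mem: "b \<in> X" and c_mem: "c \<in> X"
    and not_sim_ab: "\<not> sim a b" and not_sim_bc: "\<not> sim b c" and not_sim_ac: "\<not> sim a c"
begin

lemma categories_abc: "category a \<in> categories" "category b \<in> categories" "category c \<in> categories"
  using category_in_categories a_mem b_mem c_mem by auto

lemma categories_abc_distinct:
  "category a \<noteq> category b" "category b \<noteq> category c" "category a \<noteq> category c"
  using category_eq_iff a_mem b_mem c_mem not_sim_ab not_sim_bc not_sim_ac by auto

lemma singleton_subset_category: "x \<in> X \<Longrightarrow> {x} \<subseteq> category x"
  using mem_category_self by simp

text \<open>The value is normalised by \<open>v {a} = 1\<close>; on the category of \<open>a\<close> the odds against \<open>a\<close>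
  are not available and are routed through \<open>b\<close> instead.\<close>
definition v :: "'a set \<Rightarrow> real" where
  "v S = (if S = {} then 0 else if S \<subseteq> category a then odds S {b} * odds {b} {a} else odds S {a})"

lemma v_pos: "S \<subseteq> X \<Longrightarrow> S \<noteq> {} \<Longrightarrow> v S > 0"
  unfolding v_def using odds_pos a_mem b_mem by auto

lemma v_outside_category_a:
  assumes "C \<in> categories" "C \<noteq> category a" "S \<subseteq> C" "S \<noteq> {}"
  shows "v S = odds S {a}"
proof -
  have "C \<inter> category a = {}" using categories_disjoint categories_abc assms(1,2) by blast
  then have "\<not> S \<subseteq> category a" using assms(3,4) by blast
  then show ?thesis unfolding v_def using assms(4) by simp
qed

lemma v_inside_category_a: "S \<subseteq> category a \<Longrightarrow> S \<noteq> {} \<Longrightarrow> v S = odds S {b} * odds {b} {a}"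
  unfolding v_def by simp

lemma odds_mul_v:
  assumes C: "C \<in> categories" and D: "D \<in> categories" and "C \<noteq> D" "D \<noteq> category a"
    and S: "S \<subseteq> C" "S \<noteq> {}" and T: "T \<subseteq> D" "T \<noteq> {}"
  shows "odds S T * v T = v S"
proof -
  note Ca = categories_abc(1) and Cb = categories_abc(2) and Cc = categories_abc(3)
  note distinct = categories_abc_distinct not_sym[OF categories_abc_distinct(1)]
    not_sym[OF categories_abc_distinct(2)] not_sym[OF categories_abc_distinct(3)]
  note sa = singleton_subset_category[OF a_mem] and sb = singleton_subset_category[OF b_mem]
    and sc = singleton_subset_category[OF c_mem]
  have vT: "v T = odds T {a}" using v_outside_category_a[OF D] assms(4) T by blast
  show ?thesis
  proof (cases "C = category a")
    case False
    have "odds S T * odds T {a} = odds S {a}"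
      using odds_cocycle[OF C D Ca _ _ _ S T sa] assms(3,4) False by simp
    then show ?thesis using v_outside_category_a[OF C False S] vT by simp
  next
    case C_a: True
    then have vS: "v S = odds S {b} * odds {b} {a}" using v_inside_category_a S by simp
    show ?thesis
    proof (cases "D = category b")
      case False
      have "odds S T * odds T {b} = odds S {b}" "odds T {b} * odds {b} {a} = odds T {a}"
        using odds_cocycle[OF C D Cb _ _ _ S T sb] odds_cocycle[OF D Cb Ca _ _ _ T sb _ sa]
          assms(3,4) C_a False distinct by auto
      then show ?thesis using vS vT by (metis mult.assoc)
    next
      case True
      txt \<open>Now \<open>S\<close> lies in the category of \<open>a\<close> and \<open>T\<close> in that of \<open>b\<close>, so the odds are
        routed through \<open>c\<close>.\<close>
      have "odds S {c} * odds {c} T = odds S T" "odds S {c} * odds {c} {b} = odds S {b}"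
        "odds {c} T * odds T {a} = odds {c} {a}" "odds {c} {b} * odds {b} {a} = odds {c} {a}"
        using odds_cocycle[OF C Cc D _ _ _ S sc _ T] odds_cocycle[OF C Cc Cb _ _ _ S sc _ sb]
          odds_cocycle[OF Cc D Ca _ _ _ sc _ T sa] odds_cocycle[OF Cc Cb Ca _ _ _ sc _ sb _ sa]
          C_a True distinct by auto
      then show ?thesis using vS vT by (metis mult.assoc)
    qed
  qed
qed

lemma odds_eq_v_ratio:
  assumes C: "C \<in> categories" and D: "D \<in> categories" and "C \<noteq> D"
    and S: "S \<subseteq> C" "S \<noteq> {}" and T: "T \<subseteq> D" "T \<noteq> {}"
  shows "odds S T = v S / v T"
proof -
  have SX: "S \<subseteq> X" and TX: "T \<subseteq> X" using S T categories_subset C D by auto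
  show ?thesis
  proof (cases "D = category a")
    case False
    then show ?thesis using odds_mul_v[OF C D \<open>C \<noteq> D\<close> False S T] v_pos[OF TX T(2)]
      by (simp add: eq_divide_eq)
  next
    case True
    then have "odds T S * v S = v T" using odds_mul_v[OF D C _ _ T S] \<open>C \<noteq> D\<close> by auto
    then have "odds S T * v T = (odds S T * odds T S) * v S" by (simp add: mult.assoc)
    then show ?thesis using odds_inverse[OF SX TX S(2) T(2)] v_pos[OF TX T(2)]
      by (simp add: eq_divide_eq)
  qed
qed

lemma pset_sum_categories:
  assumes A: "A \<in> menus X"
  shows "(\<Sum>C\<in>categories. pset (A \<inter> C) A) = 1"
proof -
  have AX: "A \<subseteq> X" using A by (simp add: menus_def)
  have "(\<Sum>C\<in>categories. pset (A \<inter> C) A) = (\<Sum>z\<in>(\<Union>C\<in>categories. A \<inter> C). p z A)"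
    unfolding pset_def
  proof (rule sum.UNION_disjoint[symmetric])
    show "\<forall>C\<in>categories. finite (A \<inter> C)" using finite_subset[OF _ finite_X] AX by blast
    show "\<forall>C\<in>categories. \<forall>D\<in>categories. C \<noteq> D \<longrightarrow> A \<inter> C \<inter> (A \<inter> D) = {}"
      using categories_disjoint by (metis inf_assoc inf_bot_right inf_left_commute)
  qed (rule finite_categories)
  also have "(\<Union>C\<in>categories. A \<inter> C) = A \<inter> \<Union>categories" by blast
  also have "\<Union>categories = X" using categories_partition unfolding is_partition_def by simp
  also have "A \<inter> X = A" using AX by blast
  finally show ?thesis using pos_scf_sum_eq_1[OF pos_scf A] by simp
qed

lemma pset_v_cross:
  assumes A: "A \<in> menus X" and B: "B \<in> categories" and C: "C \<in> categories"
  shows "pset (A \<inter> C) A * v (A \<inter> B) = pset (A \<inter> B) A * v (A \<inter> C)"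
proof (cases "B = C \<or> A \<inter> B = {} \<or> A \<inter> C = {}")
  case True
  then show ?thesis by (auto simp: pset_def v_def)
next
  case False
  have AX: "A \<subseteq> X" using A by (simp add: menus_def)
  have "pset (A \<inter> B) A / pset (A \<inter> C) A = v (A \<inter> B) / v (A \<inter> C)"
    using odds_in_menu[OF A B C] odds_eq_v_ratio[OF B C] False by auto
  moreover have "pset (A \<inter> C) A > 0" "v (A \<inter> C) > 0"
    using pset_pos[OF A, of "A \<inter> C"] v_pos[of "A \<inter> C"] AX False by auto
  ultimately show ?thesis by (simp add: field_simps)
qed

lemma pset_eq_v_share:
  assumes A: "A \<in> menus X" and B: "B \<in> categories" and "A \<inter> B \<noteq> {}"
  shows "pset (A \<inter> B) A = v (A \<inter> B) / (\<Sum>C\<in>categories. v (A \<inter> C))"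
proof -
  have "v (A \<inter> B) = (\<Sum>C\<in>categories. pset (A \<inter> C) A) * v (A \<inter> B)"
    using pset_sum_categories[OF A] by simp
  also have "\<dots> = pset (A \<inter> B) A * (\<Sum>C\<in>categories. v (A \<inter> C))"
    unfolding sum_distrib_left sum_distrib_right using pset_v_cross[OF A B] by simp
  finally have eq: "v (A \<inter> B) = pset (A \<inter> B) A * (\<Sum>C\<in>categories. v (A \<inter> C))" .
  moreover have "v (A \<inter> B) > 0"
    using v_pos[of "A \<inter> B"] assms categories_subset[OF B] by auto
  ultimately have "(\<Sum>C\<in>categories. v (A \<inter> C)) \<noteq> 0" by auto
  then show ?thesis using eq by simp
qed

lemma NSC_rep_categories: "NSC_rep X p v u categories"
  unfolding NSC_rep_def
proof (intro conjI ballI allI impI)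
  show "is_partition X categories" by (rule categories_partition)
  show "\<And>x. x \<in> X \<Longrightarrow> 0 < u x" by (rule u_pos)
  show "v {} = 0" by (simp add: v_def)
next
  fix B S assume "B \<in> categories" "S \<subseteq> B"
  then have "S \<subseteq> X" using categories_subset by blast
  then show "0 \<le> v S" using v_pos[of S] by (cases "S = {}") (auto simp: v_def)
next
  fix A B x assume A: "A \<in> menus X" and B: "B \<in> categories" and x: "x \<in> A \<inter> B"
  have xX: "x \<in> X" using x categories_subset[OF B] by blast
  have Bx: "B = category x" using categories_eq_category B x by blast
  have "(\<Sum>z\<in>A \<inter> B. u z) > 0" using sum_u_pos[of "A \<inter> B"] x categories_subset[OF B] by blast
  then have "p x A = pset (A \<inter> B) A * (u x / (\<Sum>z\<in>A \<inter> B. u z))"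
    using pset_category[OF A, of x] x u_pos[OF xX] Bx by simp
  also have "pset (A \<inter> B) A = v (A \<inter> B) / (\<Sum>C\<in>categories. v (A \<inter> C))"
    using pset_eq_v_share[OF A B] x by blast
  finally show "p x A = v (A \<inter> B) / (\<Sum>C\<in>categories. v (A \<inter> C)) * (u x / (\<Sum>b\<in>A \<inter> B. u b))" .
qed

lemma nondegenerate: "nondegenerate_NSC X p"
  unfolding nondegenerate_NSC_def
proof (intro exI conjI ballI impI)
  fix B C assume B: "B \<in> categories" and C: "C \<in> categories"
    and "degenerate_block v u B \<and> degenerate_block v u C"
  then obtain x y where x: "x \<in> B" "\<forall>S. S \<subseteq> B \<and> x \<in> S \<longrightarrow> (\<Sum>z\<in>S. u z) / v S = u x / v {x}"
    and y: "y \<in> C" "\<forall>S. S \<subseteq> C \<and> y \<in> S \<longrightarrow> (\<Sum>z\<in>S. u z) / v S = u y / v {y}"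
    unfolding degenerate_block_def by blast
  have "sim x y"
    using NSC_rep_degenerate_imp_cat_sim[OF NSC_rep_categories pos_scf B C x(1) y(1) x(2) y(2)] .
  moreover have "x \<in> X" "y \<in> X" using x y B C categories_subset by auto
  ultimately show "B = C"
    using categories_eq_category B C x y category_eq_iff by metis
qed (rule NSC_rep_categories)

end

theorem theorem1:
  fixes X :: "'a set" and p :: "'a \<Rightarrow> 'a set \<Rightarrow> real"
  assumes "pos_scf X p"
    and "a \<in> X" and "b \<in> X" and "c \<in> X"
    and "\<not> cat_sim X p a b" and "\<not> cat_sim X p b c" and "\<not> cat_sim X p a c"
  shows "ISA X p \<longleftrightarrow> nondegenerate_NSC X p"
proof
  assume "ISA X p"
  then interpret ISA_choice_three_categories X p a b c
    using assms by unfold_locales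
  show "nondegenerate_NSC X p" by (rule nondegenerate)
qed (rule nondegenerate_NSC_imp_ISA[OF assms(1)])

end
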